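(* A countably based topological space is scattered if and only if it is a countable quasi-Polish space satisfying the $T_D$-axiom.
   Context: A point $x$ is isolated if $\{x\}$ is open, otherwise a limit point. Derived sets: $X^{(0)}=X$, $X^{(\alpha+1)}$ is the set of points of $X^{(\alpha)}$ that are limit points of the subspace $X^{(\alpha)}$, and $X^{(\alpha)}=\bigcap_{\beta<\alpha}X^{(\beta)}$ for limit $\alpha$; $|X|_{CB}$ is the least $\alpha$ with $X^{(\alpha)}=X^{(\alpha+1)}$. $X$ is scattered if $X^{(|X|_{CB})}=\emptyset$ (equivalently every non-empty subspace has an isolated point). A set is locally closed if it is the intersection of an open and a closed set; $X$ satisfies $T_D$ if every singleton $\{x\}$ is locally closed. A quasi-metric on a set $X$ is a function $d\colon X\times X\to[0,\infty)$ with $x=y$ iff $d(x,y)=d(y,x)=0$ and $d(x,z)\le d(x,y)+d(y,z)$; it induces the topology generated by $B_d(x,\varepsilon)=\{y\mid d(x,y)<\varepsilon\}$; $\widehat d(x,y)=\max\{d(x,y),d(y,x)\}$. $(x_n)$ is Cauchy if for every $\varepsilon>0$ there is $n_0$ with $d(x_n,x_m)<\varepsilon$ for all $m\ge n\ge n_0$; $d$ is complete if every Cauchy sequence converges in the topology of $\widehat d$. A space is quasi-Polish if it is countably based and its topology is induced by a complete quasi-metric. *)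

theory Defs
  imports "HOL-Analysis.Analysis"
begin

definition isolated_point_of :: "'a topology \<Rightarrow> 'a \<Rightarrow> bool" where
  "isolated_point_of X x \<longleftrightarrow> x \<in> topspace X \<and> openin X {x}"

definition scattered_space :: "'a topology \<Rightarrow> bool" where
  "scattered_space X \<longleftrightarrow>
     (\<forall>S. S \<subseteq> topspace X \<and> S \<noteq> {} \<longrightarrow> (\<exists>x\<in>S. isolated_point_of (subtopology X S) x))"

definition locally_closed_in :: "'a topology \<Rightarrow> 'a set \<Rightarrow> bool" where
  "locally_closed_in X A \<longleftrightarrow> (\<exists>U C. openin X U \<and> closedin X C \<and> A = U \<inter> C)"

definition T_D_space :: "'a topology \<Rightarrow> bool" where
  "T_D_space X \<longleftrightarrow> (\<forall>x\<in>topspace X. locally_closed_in X {x})"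

definition quasi_metric_on :: "'a set \<Rightarrow> ('a \<Rightarrow> 'a \<Rightarrow> real) \<Rightarrow> bool" where
  "quasi_metric_on S d \<longleftrightarrow>
     (\<forall>x\<in>S. \<forall>y\<in>S. 0 \<le> d x y) \<and>
     (\<forall>x\<in>S. \<forall>y\<in>S. x = y \<longleftrightarrow> d x y = 0 \<and> d y x = 0) \<and>
     (\<forall>x\<in>S. \<forall>y\<in>S. \<forall>z\<in>S. d x z \<le> d x y + d y z)"

definition qball :: "'a set \<Rightarrow> ('a \<Rightarrow> 'a \<Rightarrow> real) \<Rightarrow> 'a \<Rightarrow> real \<Rightarrow> 'a set" where
  "qball S d x e = {y \<in> S. d x y < e}"

definition qm_topology :: "'a set \<Rightarrow> ('a \<Rightarrow> 'a \<Rightarrow> real) \<Rightarrow> 'a topology" where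
  "qm_topology S d = topology_generated_by {qball S d x e | x e. x \<in> S \<and> 0 < e}"

definition sym_qm :: "('a \<Rightarrow> 'a \<Rightarrow> real) \<Rightarrow> 'a \<Rightarrow> 'a \<Rightarrow> real" where
  "sym_qm d x y = max (d x y) (d y x)"

definition qm_Cauchy :: "'a set \<Rightarrow> ('a \<Rightarrow> 'a \<Rightarrow> real) \<Rightarrow> (nat \<Rightarrow> 'a) \<Rightarrow> bool" where
  "qm_Cauchy S d \<sigma> \<longleftrightarrow> range \<sigma> \<subseteq> S \<and>
     (\<forall>\<epsilon>>0. \<exists>n0. \<forall>n m. n0 \<le> n \<and> n \<le> m \<longrightarrow> d (\<sigma> n) (\<sigma> m) < \<epsilon>)"

definition qm_complete :: "'a set \<Rightarrow> ('a \<Rightarrow> 'a \<Rightarrow> real) \<Rightarrow> bool" where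
  "qm_complete S d \<longleftrightarrow>
     (\<forall>\<sigma>. qm_Cauchy S d \<sigma> \<longrightarrow>
        (\<exists>y. limitin (qm_topology S (sym_qm d)) \<sigma> y sequentially))"

definition quasi_Polish :: "'a topology \<Rightarrow> bool" where
  "quasi_Polish X \<longleftrightarrow> second_countable X \<and>
     (\<exists>d. quasi_metric_on (topspace X) d \<and> qm_topology (topspace X) d = X \<and>
          qm_complete (topspace X) d)"

end

theory Submission
  imports Defs
begin

text \<open>Backward direction: in a countable complete \<open>T\<^sub>D\<close> quasi-metric space a non-empty closed
  set \<open>F = {f 0, f 1, \<dots>}\<close> without relatively isolated points is impossible. Writing
  \<open>{p} = U \<inter> C\<close> with \<open>U\<close> open and \<open>C\<close> closed, every ball around a point of \<open>F\<close> contains a smaller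
  ball centred in \<open>F\<close> that misses \<open>p\<close>; nesting such balls to miss \<open>f 0, f 1, \<dots>\<close> in turn,
  completeness produces a point of \<open>F\<close> different from every \<open>f n\<close>.

  Forward direction: a scattered space is \<open>T\<^sub>D\<close> (each point is isolated in its closure) and,
  being second countable, countable (a point isolated in the complement of the union of the
  countable basic sets would have a countable basic neighbourhood). Peeling off isolated points
  transfinitely yields open neighbourhoods \<open>W x\<close> with \<open>W y \<subseteq> W x\<close> for \<open>y \<in> W x\<close> such that
  \<open>y \<in> W x - {x}\<close> is well-founded. Then \<open>max (d\<^sub>B x y) [y \<notin> W x]\<close>, with \<open>d\<^sub>B\<close> the
  quasi-ultrametric coming from an enumerated countable base, is a quasi-metric inducing the
  topology, and its Cauchy sequences eventually descend along \<open>W\<close>, hence are eventually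
  constant.\<close>

section \<open>Quasi-metric topologies\<close>

lemma quasi_metric_on_refl: "quasi_metric_on S d \<Longrightarrow> x \<in> S \<Longrightarrow> d x x = 0"
  unfolding quasi_metric_on_def by blast

lemma centre_in_qball: "quasi_metric_on S d \<Longrightarrow> x \<in> S \<Longrightarrow> 0 < e \<Longrightarrow> x \<in> qball S d x e"
  by (simp add: qball_def quasi_metric_on_refl)

lemma quasi_metric_on_sym_qm:
  assumes "quasi_metric_on S d"
  shows "quasi_metric_on S (sym_qm d)"
  unfolding quasi_metric_on_def sym_qm_def
proof (intro conjI ballI)
  fix x y z assume "x \<in> S" "y \<in> S" "z \<in> S"
  then have "d x z \<le> d x y + d y z" "d z x \<le> d z y + d y x"
    using assms unfolding quasi_metric_on_def by blast+
  then show "max (d x z) (d z x) \<le> max (d x y) (d y x) + max (d y z) (d z y)"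
    by linarith
next
  fix x y assume "x \<in> S" "y \<in> S"
  then have "0 \<le> d x y" "0 \<le> d y x" "x = y \<longleftrightarrow> d x y = 0 \<and> d y x = 0"
    using assms unfolding quasi_metric_on_def by blast+
  then show "0 \<le> max (d x y) (d y x)"
    and "x = y \<longleftrightarrow> max (d x y) (d y x) = 0 \<and> max (d y x) (d x y) = 0"
    by (auto simp: max_def)
qed

lemma openin_qball: "x \<in> S \<Longrightarrow> 0 < e \<Longrightarrow> openin (qm_topology S d) (qball S d x e)"
  unfolding qm_topology_def by (intro topology_generated_by_Basis) auto

lemma openin_qm_topology:
  assumes qm: "quasi_metric_on S d"
  shows "openin (qm_topology S d) U \<longleftrightarrow> U \<subseteq> S \<and> (\<forall>x\<in>U. \<exists>e>0. qball S d x e \<subseteq> U)"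
proof
  assume "openin (qm_topology S d) U"
  then have "generate_topology_on {qball S d x e | x e. x \<in> S \<and> 0 < e} U"
    unfolding qm_topology_def by (rule openin_topology_generated_by)
  then show "U \<subseteq> S \<and> (\<forall>x\<in>U. \<exists>e>0. qball S d x e \<subseteq> U)"
  proof (induction rule: generate_topology_on.induct)
    case (Int a b)
    show ?case
    proof (intro conjI ballI)
      fix x assume "x \<in> a \<inter> b"
      then obtain e1 e2 where "e1 > 0" "qball S d x e1 \<subseteq> a" "e2 > 0" "qball S d x e2 \<subseteq> b"
        using Int by blast
      then show "\<exists>e>0. qball S d x e \<subseteq> a \<inter> b"
        by (intro exI[of _ "min e1 e2"]) (auto simp: qball_def)
    qed (use Int in auto)
  next
    case (UN K)
    then show ?case by (meson Sup_upper2 UnionE Union_least)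
  next
    case (Basis s)
    then obtain z e where s: "s = qball S d z e" "z \<in> S" by blast
    have "qball S d x (e - d z x) \<subseteq> s" if "x \<in> s" for x
    proof
      fix y assume "y \<in> qball S d x (e - d z x)"
      moreover have "x \<in> S" "d z x < e" using that s by (auto simp: qball_def)
      moreover have "d z y \<le> d z x + d x y" if "y \<in> S"
        using qm s(2) \<open>x \<in> S\<close> that unfolding quasi_metric_on_def by blast
      ultimately show "y \<in> s" using s by (auto simp: qball_def)
    qed
    moreover have "0 < e - d z x" if "x \<in> s" for x
      using that s by (simp add: qball_def)
    moreover have "s \<subseteq> S" using s by (simp add: qball_def)
    ultimately show ?case by blast
  qed auto
next
  assume U: "U \<subseteq> S \<and> (\<forall>x\<in>U. \<exists>e>0. qball S d x e \<subseteq> U)"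
  then obtain e where e: "\<And>x. x \<in> U \<Longrightarrow> e x > 0 \<and> qball S d x (e x) \<subseteq> U" by metis
  have "openin (qm_topology S d) (\<Union>x\<in>U. qball S d x (e x))"
    using U e by (intro openin_Union) (auto intro: openin_qball)
  moreover have "(\<Union>x\<in>U. qball S d x (e x)) = U"
    using U e centre_in_qball[OF qm] by blast
  ultimately show "openin (qm_topology S d) U" by simp
qed

lemma topspace_qm_topology_subset: "topspace (qm_topology S d) \<subseteq> S"
  by (auto simp: qm_topology_def qball_def)

lemma topspace_qm_topology:
  assumes "quasi_metric_on S d"
  shows "topspace (qm_topology S d) = S"
proof
  show "S \<subseteq> topspace (qm_topology S d)"
    using centre_in_qball[OF assms] openin_subset[OF openin_qball] by (meson subsetD subsetI zero_less_one)
qed (fact topspace_qm_topology_subset)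

lemma qm_topology_eqI:
  assumes qm: "quasi_metric_on (topspace X) d"
    and balls_open: "\<And>x e. x \<in> topspace X \<Longrightarrow> 0 < e \<Longrightarrow> openin X (qball (topspace X) d x e)"
    and balls_small: "\<And>U x. openin X U \<Longrightarrow> x \<in> U \<Longrightarrow> \<exists>e>0. qball (topspace X) d x e \<subseteq> U"
  shows "qm_topology (topspace X) d = X"
  unfolding topology_eq openin_qm_topology[OF qm]
proof (intro allI iffI)
  fix U assume U: "U \<subseteq> topspace X \<and> (\<forall>x\<in>U. \<exists>e>0. qball (topspace X) d x e \<subseteq> U)"
  show "openin X U"
  proof (subst openin_subopen, intro ballI)
    fix x assume "x \<in> U"
    then obtain e where e: "e > 0" "qball (topspace X) d x e \<subseteq> U" and x: "x \<in> topspace X"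
      using U by blast
    show "\<exists>T. openin X T \<and> x \<in> T \<and> T \<subseteq> U"
      using balls_open[OF x e(1)] centre_in_qball[OF qm x e(1)] e(2) by blast
  qed
next
  fix U assume U: "openin X U"
  then show "U \<subseteq> topspace X \<and> (\<forall>x\<in>U. \<exists>e>0. qball (topspace X) d x e \<subseteq> U)"
    using openin_subset[OF U] balls_small[OF U] by blast
qed

lemma limitin_sym_qm_eventually:
  assumes qm: "quasi_metric_on S d"
    and lim: "limitin (qm_topology S (sym_qm d)) \<sigma> y sequentially" and "0 < e"
  shows "y \<in> S" "eventually (\<lambda>n. d (\<sigma> n) y < e \<and> d y (\<sigma> n) < e) sequentially"
proof -
  show yS: "y \<in> S"
    using subsetD[OF topspace_qm_topology_subset limitin_topspace[OF lim]] .
  have "openin (qm_topology S (sym_qm d)) (qball S (sym_qm d) y e)"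
    using yS \<open>0 < e\<close> by (rule openin_qball)
  moreover have "y \<in> qball S (sym_qm d) y e"
    using centre_in_qball[OF quasi_metric_on_sym_qm[OF qm] yS \<open>0 < e\<close>] .
  ultimately have "eventually (\<lambda>n. \<sigma> n \<in> qball S (sym_qm d) y e) sequentially"
    using lim unfolding limitin_def by blast
  then show "eventually (\<lambda>n. d (\<sigma> n) y < e \<and> d y (\<sigma> n) < e) sequentially"
    by eventually_elim (simp add: qball_def sym_qm_def)
qed

section \<open>Countable complete \<open>T\<^sub>D\<close> spaces are scattered\<close>

text \<open>If \<open>p\<close> lies in the ball, write \<open>{p} = U \<inter> C\<close>; as \<open>p\<close> is not isolated in \<open>F\<close>, the open set
  \<open>U \<inter> ball\<close> meets \<open>F\<close> in a point outside \<open>C\<close>, around which a ball fits into \<open>U \<inter> ball - C\<close>.\<close>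
lemma T_D_shrink_qball_avoiding:
  assumes qm: "quasi_metric_on S d" and TD: "T_D_space (qm_topology S d)"
    and FS: "F \<subseteq> S"
    and no_isolated: "\<And>x U. x \<in> F \<Longrightarrow> openin (qm_topology S d) U \<Longrightarrow> U \<inter> F \<noteq> {x}"
    and x: "x \<in> F" and e: "0 < e" and p: "p \<in> F"
  obtains x' e' where "x' \<in> F" "0 < e'" "e' \<le> e"
    "qball S d x' e' \<subseteq> qball S d x e" "p \<notin> qball S d x' e'"
proof (cases "p \<in> qball S d x e")
  case False
  then show ?thesis using that x e by blast
next
  case True
  let ?Y = "qm_topology S d"
  obtain U C where UC: "openin ?Y U" "closedin ?Y C" "{p} = U \<inter> C"
    using TD p FS topspace_qm_topology[OF qm]
    unfolding T_D_space_def locally_closed_in_def by (metis subsetD)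
  define V where "V = U \<inter> qball S d x e"
  have "openin ?Y V"
    unfolding V_def using UC(1) openin_qball[OF subsetD[OF FS x] e] by (rule openin_Int)
  moreover have "p \<in> V" using UC True unfolding V_def by auto
  ultimately have "V \<inter> F \<noteq> {p}" using no_isolated[OF p] by blast
  then obtain z where z: "z \<in> V" "z \<in> F" "z \<noteq> p" using \<open>p \<in> V\<close> p by blast
  have "openin ?Y (V - C)"
    using \<open>openin ?Y V\<close> UC(2) by (rule openin_diff)
  moreover have "z \<in> V - C" using z UC(3) unfolding V_def by blast
  ultimately obtain r where r: "0 < r" "qball S d z r \<subseteq> V - C"
    using openin_qm_topology[OF qm] by blast
  have small: "qball S d z (min r e) \<subseteq> qball S d z r"
    by (auto simp: qball_def)
  show ?thesis
  proof (rule that)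
    show "qball S d z (min r e) \<subseteq> qball S d x e"
      using small r(2) unfolding V_def by blast
    show "p \<notin> qball S d z (min r e)"
      using small r(2) UC(3) by blast
  qed (use z r e in auto)
qed

lemma complete_nested_qballs:
  assumes qm: "quasi_metric_on S d" and complete: "qm_complete S d"
    and x: "\<And>n. x n \<in> S" and r: "\<And>n. 0 < r n" "\<And>n. r n \<le> (1/2) ^ n"
    and nested: "\<And>n. qball S d (x (Suc n)) (r (Suc n)) \<subseteq> qball S d (x n) (r n / 2)"
  obtains y where "limitin (qm_topology S (sym_qm d)) x y sequentially"
    "\<And>n. y \<in> qball S d (x n) (r n)"
proof -
  have half: "qball S d (x n) (r n / 2) \<subseteq> qball S d (x n) (r n)" for n
    using r(1)[of n] by (auto simp: qball_def)
  have ball_mono: "qball S d (x m) (r m) \<subseteq> qball S d (x n) (r n / 2)" if "n < m" for n m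
    using that
  proof (induction m)
    case (Suc m)
    show ?case
    proof (cases "n = m")
      case False
      then have "n < m" using Suc.prems by simp
      then show ?thesis using nested[of m] half[of m] Suc.IH by blast
    qed (use nested in simp)
  qed simp
  have close: "d (x n) (x m) < r n / 2" if "n < m" for n m
    using ball_mono[OF that] centre_in_qball[OF qm x r(1)] by (auto simp: qball_def)
  have "qm_Cauchy S d x"
    unfolding qm_Cauchy_def
  proof (intro conjI allI impI)
    show "range x \<subseteq> S" using x by blast
    fix \<epsilon> :: real assume "0 < \<epsilon>"
    then obtain n0 where n0: "(1/2) ^ n0 < \<epsilon>" using real_arch_pow_inv[of \<epsilon> "1/2"] by auto
    show "\<exists>n0. \<forall>n m. n0 \<le> n \<and> n \<le> m \<longrightarrow> d (x n) (x m) < \<epsilon>"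
    proof (intro exI allI impI)
      fix n m assume nm: "n0 \<le> n \<and> n \<le> m"
      have "d (x n) (x m) < r n"
        using close[of n m] r(1)[of n] quasi_metric_on_refl[OF qm x] nm by (cases "n = m") auto
      also have "\<dots> \<le> (1/2) ^ n0"
        using r(2)[of n] power_decreasing[of n0 n "1/2 :: real"] nm by linarith
      finally show "d (x n) (x m) < \<epsilon>" using n0 by linarith
    qed
  qed
  then obtain y where lim: "limitin (qm_topology S (sym_qm d)) x y sequentially"
    using complete unfolding qm_complete_def by blast
  have "y \<in> qball S d (x n) (r n)" for n
  proof -
    have "0 < r n / 2" using r(1) by simp
    from limitin_sym_qm_eventually[OF qm lim this] have yS: "y \<in> S"
      and "eventually (\<lambda>m. d (x m) y < r n / 2) sequentially" by (auto elim: eventually_mono)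
    then obtain M where M: "\<And>m. M \<le> m \<Longrightarrow> d (x m) y < r n / 2"
      unfolding eventually_sequentially by blast
    define m where "m = max M (Suc n)"
    have "d (x n) y \<le> d (x n) (x m) + d (x m) y"
      using qm x yS unfolding quasi_metric_on_def by blast
    also have "\<dots> < r n"
      using close[of n m] M[of m] unfolding m_def by linarith
    finally show ?thesis using yS by (simp add: qball_def)
  qed
  then show ?thesis using that lim by blast
qed

lemma T_D_obtain_nested_qballs_avoiding:
  assumes qm: "quasi_metric_on S d" and TD: "T_D_space (qm_topology S d)"
    and FS: "F \<subseteq> S"
    and no_isolated: "\<And>x U. x \<in> F \<Longrightarrow> openin (qm_topology S d) U \<Longrightarrow> U \<inter> F \<noteq> {x}"
    and "F \<noteq> {}" and f: "range f \<subseteq> F"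
  obtains x r where "\<And>n. x n \<in> F" "\<And>n. 0 < r n" "\<And>n. r n \<le> (1/2) ^ n"
    "\<And>n. qball S d (x (Suc n)) (r (Suc n)) \<subseteq> qball S d (x n) (r n / 2)"
    "\<And>n. f n \<notin> qball S d (x (Suc n)) (r (Suc n))"
proof -
  define P where "P n = (\<lambda>(x, r). x \<in> F \<and> 0 < r \<and> r \<le> (1/2 :: real) ^ n)" for n
  define Q where "Q n = (\<lambda>(x, r) (x', r'). qball S d x' r' \<subseteq> qball S d x (r / 2)
      \<and> f n \<notin> qball S d x' r')" for n
  have "\<exists>q. P (Suc n) q \<and> Q n p q" if "P n p" for n p
  proof -
    obtain x r where p: "p = (x, r)" "x \<in> F" "0 < r" "r \<le> (1/2) ^ n"
      using \<open>P n p\<close> unfolding P_def by auto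
    have r2: "0 < r / 2" and fn: "f n \<in> F" using p(3) f by auto
    obtain x' r' where "x' \<in> F" "0 < r'" "r' \<le> r / 2"
      "qball S d x' r' \<subseteq> qball S d x (r / 2)" "f n \<notin> qball S d x' r'"
      by (rule T_D_shrink_qball_avoiding[OF qm TD FS no_isolated p(2) r2 fn])
    then show ?thesis
      using p unfolding P_def Q_def by (intro exI[of _ "(x', r')"]) auto
  qed
  moreover obtain x0 where "x0 \<in> F" using \<open>F \<noteq> {}\<close> by blast
  then have "P 0 (x0, 1)" unfolding P_def by simp
  ultimately have "\<exists>s. \<forall>n. P n (s n) \<and> Q n (s n) (s (Suc n))"
    by (intro dependent_nat_choice) auto
  then obtain s where s: "\<And>n. P n (s n)" "\<And>n. Q n (s n) (s (Suc n))" by blast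
  show ?thesis
  proof
    show "fst (s n) \<in> F" "0 < snd (s n)" "snd (s n) \<le> (1/2) ^ n" for n
      using s(1)[of n] unfolding P_def by (auto split: prod.splits)
    show "qball S d (fst (s (Suc n))) (snd (s (Suc n))) \<subseteq> qball S d (fst (s n)) (snd (s n) / 2)"
      "f n \<notin> qball S d (fst (s (Suc n))) (snd (s (Suc n)))" for n
      using s(2)[of n] unfolding Q_def by (auto split: prod.splits)
  qed
qed

lemma countable_complete_T_D_closedin_isolated:
  assumes qm: "quasi_metric_on S d" and TD: "T_D_space (qm_topology S d)"
    and complete: "qm_complete S d" and countable: "countable S"
    and F: "closedin (qm_topology S d) F" "F \<noteq> {}"
  shows "\<exists>x\<in>F. \<exists>U. openin (qm_topology S d) U \<and> U \<inter> F = {x}"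
proof (rule ccontr)
  let ?Y = "qm_topology S d"
  assume "\<not> ?thesis"
  then have no_isolated: "\<And>x U. x \<in> F \<Longrightarrow> openin ?Y U \<Longrightarrow> U \<inter> F \<noteq> {x}" by blast
  have FS: "F \<subseteq> S" using closedin_subset[OF F(1)] topspace_qm_topology[OF qm] by simp
  define f where "f = from_nat_into F"
  have range_f: "range f = F"
    unfolding f_def using F(2) countable_subset[OF FS countable] by (rule range_from_nat_into)
  obtain x r where xF: "\<And>n. x n \<in> F" and r: "\<And>n. 0 < r n" "\<And>n. r n \<le> (1/2) ^ n"
    and nested: "\<And>n. qball S d (x (Suc n)) (r (Suc n)) \<subseteq> qball S d (x n) (r n / 2)"
    and avoid: "\<And>n. f n \<notin> qball S d (x (Suc n)) (r (Suc n))"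
    using T_D_obtain_nested_qballs_avoiding[OF qm TD FS no_isolated F(2) equalityD1[OF range_f]]
    by metis
  have xS: "x n \<in> S" for n using xF FS by blast
  obtain y where lim: "limitin (qm_topology S (sym_qm d)) x y sequentially"
    and y: "\<And>n. y \<in> qball S d (x n) (r n)"
    using complete_nested_qballs[OF qm complete xS r nested] by metis
  have "y \<in> F"
  proof (rule ccontr)
    assume "y \<notin> F"
    then have "y \<in> S - F" using y[of 0] by (simp add: qball_def)
    moreover have "openin ?Y (S - F)"
      using F(1) topspace_qm_topology[OF qm] by (simp add: closedin_def)
    ultimately obtain e where e: "0 < e" "qball S d y e \<subseteq> S - F"
      using openin_qm_topology[OF qm, of "S - F"] by blast
    obtain M where "d y (x M) < e"
      using eventually_happens'[OF _ limitin_sym_qm_eventually(2)[OF qm lim e(1)]] by auto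
    then have "x M \<in> qball S d y e" using xF FS by (auto simp: qball_def)
    then show False using e xF by blast
  qed
  then obtain k where "y = f k" using range_f by blast
  then show False using avoid[of k] y[of "Suc k"] by simp
qed

lemma scattered_space_if_closedin_isolated:
  assumes "\<And>F. closedin X F \<Longrightarrow> F \<noteq> {} \<Longrightarrow> \<exists>x\<in>F. \<exists>U. openin X U \<and> U \<inter> F = {x}"
  shows "scattered_space X"
  unfolding scattered_space_def isolated_point_of_def
proof (intro allI impI)
  fix T assume T: "T \<subseteq> topspace X \<and> T \<noteq> {}"
  then have T_closure: "T \<subseteq> X closure_of T" by (simp add: closure_of_subset)
  then have "X closure_of T \<noteq> {}" using T by blast
  then obtain x U where x: "x \<in> X closure_of T" and U: "openin X U" "U \<inter> X closure_of T = {x}"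
    using assms[OF closedin_closure_of] by blast
  then have "x \<in> U" by blast
  then obtain y where "y \<in> T" "y \<in> U" using x U(1) unfolding in_closure_of by blast
  then have "y = x" using U(2) T_closure by blast
  then have xT: "x \<in> T" using \<open>y \<in> T\<close> by simp
  then have "U \<inter> T = {x}" using U(2) T_closure \<open>x \<in> U\<close> by blast
  then have "openin (subtopology X T) {x}" using U(1) unfolding openin_subtopology by blast
  moreover have "x \<in> topspace (subtopology X T)" using xT T by auto
  ultimately show "\<exists>x\<in>T. x \<in> topspace (subtopology X T) \<and> openin (subtopology X T) {x}"
    using xT by blast
qed

lemma countable_quasi_Polish_T_D_imp_scattered:
  assumes "countable (topspace X)" "quasi_Polish X" "T_D_space X"
  shows "scattered_space X"
proof (rule scattered_space_if_closedin_isolated)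
  obtain d where "quasi_metric_on (topspace X) d" "qm_topology (topspace X) d = X"
    "qm_complete (topspace X) d"
    using assms(2) unfolding quasi_Polish_def by blast
  then show "\<exists>x\<in>F. \<exists>U. openin X U \<and> U \<inter> F = {x}" if "closedin X F" "F \<noteq> {}" for F
    using countable_complete_T_D_closedin_isolated[of "topspace X" d F] assms that by simp
qed

section \<open>Scattered spaces are \<open>T\<^sub>D\<close> and countable\<close>

lemma scattered_space_obtain_isolated:
  assumes "scattered_space X" "T \<subseteq> topspace X" "T \<noteq> {}"
  obtains x U where "x \<in> T" "openin X U" "U \<inter> T = {x}"
proof -
  obtain x where "x \<in> T" "openin (subtopology X T) {x}"
    using assms unfolding scattered_space_def isolated_point_of_def by meson
  then obtain U where "openin X U" "{x} = U \<inter> T" unfolding openin_subtopology by blast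
  then show ?thesis using that \<open>x \<in> T\<close> by blast
qed

lemma scattered_imp_T_D:
  assumes "scattered_space X"
  shows "T_D_space X"
  unfolding T_D_space_def locally_closed_in_def
proof
  fix x assume x: "x \<in> topspace X"
  let ?C = "X closure_of {x}"
  have "x \<in> ?C" using x closure_of_subset[of "{x}" X] by blast
  moreover have "?C \<subseteq> topspace X" by (rule closure_of_subset_topspace)
  ultimately obtain z U where z: "z \<in> ?C" "openin X U" "U \<inter> ?C = {z}"
    using scattered_space_obtain_isolated[OF assms] by blast
  then have "x \<in> U" unfolding in_closure_of by blast
  then have "x = z" using z(3) \<open>x \<in> ?C\<close> by blast
  then have "{x} = U \<inter> ?C" using z(3) by simp
  then show "\<exists>U C. openin X U \<and> closedin X C \<and> {x} = U \<inter> C"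
    using z(2) closedin_closure_of by blast
qed

lemma scattered_second_countable_imp_countable:
  assumes scattered: "scattered_space X" and "second_countable X"
  shows "countable (topspace X)"
proof -
  obtain B where B: "countable B" "\<forall>V\<in>B. openin X V"
    "\<forall>U x. openin X U \<and> x \<in> U \<longrightarrow> (\<exists>V\<in>B. x \<in> V \<and> V \<subseteq> U)"
    using assms(2) unfolding second_countable_def by blast
  define C where "C = (\<Union>V \<in> {V \<in> B. countable V}. V)"
  have "countable C" unfolding C_def using B(1) by (intro countable_UN countable_Collect) auto
  have "topspace X \<subseteq> C"
  proof (rule ccontr)
    assume "\<not> topspace X \<subseteq> C"
    then have "topspace X - C \<noteq> {}" by blast
    then obtain x U where x: "x \<in> topspace X - C" and U: "openin X U" "U \<inter> (topspace X - C) = {x}"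
      by (rule scattered_space_obtain_isolated[OF scattered Diff_subset])
    then have "x \<in> U" by blast
    then obtain V where V: "V \<in> B" "x \<in> V" "V \<subseteq> U" using B(3) U(1) by blast
    moreover have "V \<subseteq> topspace X" using V(1) B(2) openin_subset by blast
    ultimately have "V \<subseteq> insert x C" using U(2) by blast
    then have "countable V" using countable_insert[OF \<open>countable C\<close>] by (rule countable_subset)
    then have "x \<in> C" using V(1,2) unfolding C_def by blast
    then show False using x by blast
  qed
  then show ?thesis using \<open>countable C\<close> by (rule countable_subset)
qed

section \<open>Well-founded neighbourhood assignments\<close>

definition nbhd_descent :: "('a \<times> 'a set) set \<Rightarrow> ('a \<times> 'a) set" where
  "nbhd_descent R = {(y, x). \<exists>V. (x, V) \<in> R \<and> y \<in> V \<and> y \<noteq> x}"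

text \<open>Partial neighbourhood assignments are encoded as single-valued relations, so that Zorn's
  lemma applies to them.\<close>
definition wf_nbhd_rel :: "'a topology \<Rightarrow> ('a \<times> 'a set) set \<Rightarrow> bool" where
  "wf_nbhd_rel X R \<longleftrightarrow> single_valued R \<and>
     (\<forall>x V. (x, V) \<in> R \<longrightarrow> openin X V \<and> x \<in> V \<and> V \<subseteq> Domain R) \<and>
     wf (nbhd_descent R)"

lemma single_valued_chain_Union:
  assumes "chain\<^sub>\<subseteq> C" "\<And>R. R \<in> C \<Longrightarrow> single_valued R"
  shows "single_valued (\<Union>C)"
  unfolding single_valued_def
proof (intro allI impI)
  fix x V V' assume "(x, V) \<in> \<Union>C" "(x, V') \<in> \<Union>C"
  then obtain R R' where "R \<in> C" "(x, V) \<in> R" "R' \<in> C" "(x, V') \<in> R'" by blast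
  moreover have "R \<subseteq> R' \<or> R' \<subseteq> R" using assms(1) \<open>R \<in> C\<close> \<open>R' \<in> C\<close>
    unfolding chain_subset_def by blast
  ultimately show "V = V'" using assms(2) unfolding single_valued_def by blast
qed

text \<open>A descent from a point of \<open>Domain R\<close> never leaves \<open>Domain R\<close>, where \<open>\<Union>C\<close> agrees with
  \<open>R\<close>; so minimal elements for \<open>R\<close> are minimal for \<open>\<Union>C\<close>.\<close>
lemma wf_nbhd_rel_chain_Union:
  assumes C: "C \<in> chains {R. wf_nbhd_rel X R}"
  shows "wf_nbhd_rel X (\<Union>C)"
proof -
  have R: "\<And>R. R \<in> C \<Longrightarrow> wf_nbhd_rel X R" and chain: "chain\<^sub>\<subseteq> C"
    using C unfolding chains_def by auto
  have sv: "single_valued (\<Union>C)"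
    using chain R by (intro single_valued_chain_Union) (auto simp: wf_nbhd_rel_def)
  have local: "openin X V \<and> x \<in> V \<and> V \<subseteq> Domain (\<Union>C)" if "(x, V) \<in> \<Union>C" for x V
    using that R unfolding wf_nbhd_rel_def by blast
  have "wf (nbhd_descent (\<Union>C))"
  proof (rule wfI_min)
    fix x :: 'a and Q assume "x \<in> Q"
    show "\<exists>z\<in>Q. \<forall>y. (y, z) \<in> nbhd_descent (\<Union>C) \<longrightarrow> y \<notin> Q"
    proof (cases "x \<in> Domain (\<Union>C)")
      case False
      then show ?thesis using \<open>x \<in> Q\<close> unfolding nbhd_descent_def by blast
    next
      case True
      then obtain R where "R \<in> C" "x \<in> Domain R" by blast
      have wfR: "wf_nbhd_rel X R" using R[OF \<open>R \<in> C\<close>] .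
      then obtain z where z: "z \<in> Q \<inter> Domain R"
        and min: "\<And>y. (y, z) \<in> nbhd_descent R \<Longrightarrow> y \<notin> Q \<inter> Domain R"
        using \<open>x \<in> Q\<close> \<open>x \<in> Domain R\<close> wfE_min[of "nbhd_descent R" x "Q \<inter> Domain R"]
        unfolding wf_nbhd_rel_def by blast
      have "y \<notin> Q" if descent: "(y, z) \<in> nbhd_descent (\<Union>C)" for y
      proof -
        obtain V where V: "(z, V) \<in> \<Union>C" "y \<in> V" "y \<noteq> z"
          using descent unfolding nbhd_descent_def by blast
        obtain V' where "(z, V') \<in> R" using z by blast
        moreover have "V' = V" using sv V(1) calculation \<open>R \<in> C\<close> unfolding single_valued_def by blast
        ultimately have "(y, z) \<in> nbhd_descent R" "y \<in> Domain R"
          using V wfR unfolding nbhd_descent_def wf_nbhd_rel_def by blast+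
        then show ?thesis using min by blast
      qed
      then show ?thesis using z by blast
    qed
  qed
  then show ?thesis using sv local unfolding wf_nbhd_rel_def by blast
qed

text \<open>Extend by a point isolated in the complement of the domain: its neighbourhood lies in the
  old domain apart from the point itself, so the only new descents end at the new point.\<close>
lemma wf_nbhd_rel_extend:
  assumes R: "wf_nbhd_rel X R" and scattered: "scattered_space X"
    and partial: "Domain R \<noteq> topspace X"
  obtains R' where "wf_nbhd_rel X R'" "R \<subset> R'"
proof -
  have "Domain R \<subseteq> topspace X"
  proof
    fix z assume "z \<in> Domain R"
    then obtain W where "openin X W" "z \<in> W" using R unfolding wf_nbhd_rel_def by blast
    then show "z \<in> topspace X" using openin_subset by blast
  qed
  then have "topspace X - Domain R \<noteq> {}" using partial by blast
  then obtain x V where x: "x \<in> topspace X - Domain R" and V: "openin X V"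
    "V \<inter> (topspace X - Domain R) = {x}"
    by (rule scattered_space_obtain_isolated[OF scattered Diff_subset])
  define R' where "R' = insert (x, V) R"
  have "x \<in> V" using V by blast
  have V_dom: "V \<subseteq> insert x (Domain R)" using V openin_subset[OF V(1)] by blast
  have "single_valued R'"
    using R x unfolding R'_def wf_nbhd_rel_def single_valued_def by blast
  moreover have "openin X W \<and> z \<in> W \<and> W \<subseteq> Domain R'" if zW: "(z, W) \<in> R'" for z W
  proof (cases "(z, W) \<in> R")
    case True
    then show ?thesis using R unfolding R'_def wf_nbhd_rel_def by blast
  next
    case False
    then have "z = x" "W = V" using zW unfolding R'_def by simp_all
    then show ?thesis using V(1) \<open>x \<in> V\<close> V_dom unfolding R'_def by auto
  qed
  moreover have "wf (nbhd_descent R')"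
  proof (rule wf_subset)
    let ?new = "{(y, x) | y. y \<noteq> x}"
    show "nbhd_descent R' \<subseteq> nbhd_descent R \<union> ?new"
      unfolding R'_def nbhd_descent_def by blast
    have "wf ?new"
      by (rule wf_subset[OF wf_measure[of "\<lambda>z. if z = x then 1 else 0"]]) auto
    moreover have "Domain (nbhd_descent R) \<inter> Range ?new = {}"
      using R x unfolding wf_nbhd_rel_def nbhd_descent_def by blast
    moreover have "wf (nbhd_descent R)" using R unfolding wf_nbhd_rel_def by blast
    ultimately show "wf (nbhd_descent R \<union> ?new)" by (intro wf_Un)
  qed
  ultimately have "wf_nbhd_rel X R'" unfolding wf_nbhd_rel_def by blast
  moreover have "R \<subset> R'" using x unfolding R'_def by blast
  ultimately show ?thesis by (rule that)
qed

lemma scattered_space_obtain_wf_nbhds: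
  assumes "scattered_space X"
  obtains V where "\<And>x. x \<in> topspace X \<Longrightarrow> openin X (V x) \<and> x \<in> V x"
    "wf {(y, x). x \<in> topspace X \<and> y \<in> V x \<and> y \<noteq> x}"
proof -
  obtain R where R: "wf_nbhd_rel X R" and max: "\<And>R'. wf_nbhd_rel X R' \<Longrightarrow> R \<subseteq> R' \<Longrightarrow> R' = R"
    using Zorn_Lemma[of "{R. wf_nbhd_rel X R}"] wf_nbhd_rel_chain_Union by blast
  have dom: "Domain R = topspace X"
  proof (rule ccontr)
    assume "Domain R \<noteq> topspace X"
    then obtain R' where "wf_nbhd_rel X R'" "R \<subset> R'"
      using wf_nbhd_rel_extend[OF R assms] by blast
    then show False using max by blast
  qed
  define V where "V x = (SOME V. (x, V) \<in> R)" for x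
  have xV: "(x, V x) \<in> R" if "x \<in> topspace X" for x
    unfolding V_def using that dom by (metis DomainE someI_ex)
  show ?thesis
  proof
    show "openin X (V x) \<and> x \<in> V x" if "x \<in> topspace X" for x
      using xV[OF that] R unfolding wf_nbhd_rel_def by blast
    have "{(y, x). x \<in> topspace X \<and> y \<in> V x \<and> y \<noteq> x} \<subseteq> nbhd_descent R"
      using xV unfolding nbhd_descent_def by blast
    then show "wf {(y, x). x \<in> topspace X \<and> y \<in> V x \<and> y \<noteq> x}"
      using R wf_subset unfolding wf_nbhd_rel_def by blast
  qed
qed

text \<open>Close under reachability: descents along the closure are transitive-closure descents.\<close>
lemma wf_nbhds_obtain_transitive:
  assumes V: "\<And>x. x \<in> topspace X \<Longrightarrow> openin X (V x) \<and> x \<in> V x"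
    and wf: "wf {(y, x). x \<in> topspace X \<and> y \<in> V x \<and> y \<noteq> x}"
  obtains W where "\<And>x. x \<in> topspace X \<Longrightarrow> openin X (W x) \<and> x \<in> W x"
    "\<And>x y. x \<in> topspace X \<Longrightarrow> y \<in> W x \<Longrightarrow> W y \<subseteq> W x"
    "wf {(y, x). x \<in> topspace X \<and> y \<in> W x \<and> y \<noteq> x}"
proof
  let ?E = "{(x, y). x \<in> topspace X \<and> y \<in> V x}"
  let ?D = "{(y, x). x \<in> topspace X \<and> y \<in> V x \<and> y \<noteq> x}"
  define W where "W x = {y. (x, y) \<in> ?E\<^sup>*}" for x
  have reach_top: "y \<in> topspace X" if "(x, y) \<in> ?E\<^sup>*" "x \<in> topspace X" for x y
    using that
  proof (induction rule: rtrancl_induct)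
    case (step y z)
    then have "z \<in> V y" "openin X (V y)" using V by auto
    then show ?case using openin_subset by blast
  qed
  show "openin X (W x) \<and> x \<in> W x" if "x \<in> topspace X" for x
  proof
    have "W x = (\<Union>z\<in>W x. V z)"
      using V reach_top[OF _ that] unfolding W_def by (blast intro: rtrancl_into_rtrancl)
    also have "openin X \<dots>"
      using V reach_top[OF _ that] unfolding W_def by (intro openin_Union) blast
    finally show "openin X (W x)" .
  qed (simp add: W_def)
  show "W y \<subseteq> W x" if "y \<in> W x" for x y
    using that unfolding W_def by (auto intro: rtrancl_trans)
  have "(y, x) \<in> ?D\<^sup>+" if "(x, y) \<in> ?E\<^sup>*" "y \<noteq> x" for x y
    using that
  proof (induction rule: rtrancl_induct)
    case (step z y)
    show ?case
    proof (cases "z = y")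
      case False
      then have "(y, z) \<in> ?D" using step(2) by blast
      then show ?thesis using step(3) by (cases "z = x") (auto intro: trancl_into_trancl2)
    qed (use step in simp)
  qed simp
  then have "{(y, x). x \<in> topspace X \<and> y \<in> W x \<and> y \<noteq> x} \<subseteq> ?D\<^sup>+"
    unfolding W_def by blast
  then show "wf {(y, x). x \<in> topspace X \<and> y \<in> W x \<and> y \<noteq> x}"
    using wf_trancl[OF wf] wf_subset by blast
qed

section \<open>A complete quasi-metric on a scattered space\<close>

lemma second_countable_obtain_base_seq:
  assumes "second_countable X"
  obtains b :: "nat \<Rightarrow> 'a set" where "\<And>n. openin X (b n)"
    "\<And>U x. openin X U \<Longrightarrow> x \<in> U \<Longrightarrow> \<exists>n. x \<in> b n \<and> b n \<subseteq> U"
proof -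
  obtain B where B: "countable B" "\<forall>V\<in>B. openin X V"
    "\<forall>U x. openin X U \<and> x \<in> U \<longrightarrow> (\<exists>V\<in>B. x \<in> V \<and> V \<subseteq> U)"
    using assms unfolding second_countable_def by blast
  define b where "b = from_nat_into (insert (topspace X) B)"
  have range_b: "range b = insert (topspace X) B"
    unfolding b_def using B(1) by simp
  show ?thesis
  proof
    show "openin X (b n)" for n
    proof -
      have "b n \<in> insert (topspace X) B" unfolding range_b[symmetric] by simp
      then show ?thesis using B(2) by auto
    qed
    show "\<exists>n. x \<in> b n \<and> b n \<subseteq> U" if U: "openin X U" "x \<in> U" for U x
    proof -
      obtain V where V: "V \<in> B" "x \<in> V" "V \<subseteq> U" using B(3) U by blast
      moreover have "V \<in> range b" unfolding range_b using V(1) by simp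
      then obtain n where "V = b n" by blast
      ultimately show ?thesis by blast
    qed
  qed
qed

text \<open>Pull-back of the Sierpinski-cube quasi-ultrametric along \<open>x \<mapsto> (\<lambda>n. x \<in> b n)\<close>:
  the distance from \<open>x\<close> to \<open>y\<close> is \<open>1 / (n + 1)\<close> for the first \<open>n\<close> with \<open>x \<in> b n\<close>, \<open>y \<notin> b n\<close>.\<close>
definition base_qdist :: "(nat \<Rightarrow> 'a set) \<Rightarrow> 'a \<Rightarrow> 'a \<Rightarrow> real" where
  "base_qdist b x y =
     (if \<exists>n. x \<in> b n \<and> y \<notin> b n then inverse (real (Suc (LEAST n. x \<in> b n \<and> y \<notin> b n))) else 0)"

lemma base_qdist_nonneg: "0 \<le> base_qdist b x y"
  by (simp add: base_qdist_def)

lemma base_qdist_self: "base_qdist b x x = 0"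
  by (simp add: base_qdist_def)

lemma inverse_Suc_antimono: "m \<le> n \<Longrightarrow> inverse (real (Suc n)) \<le> inverse (real (Suc m))"
  by (intro le_imp_inverse_le) simp_all

lemma base_qdist_ge:
  assumes "x \<in> b n" "y \<notin> b n"
  shows "inverse (real (Suc n)) \<le> base_qdist b x y"
proof -
  have ex: "\<exists>n. x \<in> b n \<and> y \<notin> b n" using assms by blast
  have "(LEAST n. x \<in> b n \<and> y \<notin> b n) \<le> n" using assms by (intro Least_le) simp
  then show ?thesis unfolding base_qdist_def if_P[OF ex] by (rule inverse_Suc_antimono)
qed

lemma base_qdist_le:
  assumes agree: "\<And>n. n < K \<Longrightarrow> x \<in> b n \<Longrightarrow> y \<in> b n"
  shows "base_qdist b x y \<le> inverse (real (Suc K))"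
proof (cases "\<exists>n. x \<in> b n \<and> y \<notin> b n")
  case True
  let ?l = "LEAST n. x \<in> b n \<and> y \<notin> b n"
  have l: "x \<in> b ?l \<and> y \<notin> b ?l" using True by (rule LeastI_ex)
  have "K \<le> ?l"
  proof (rule ccontr)
    assume "\<not> K \<le> ?l"
    then have "?l < K" by simp
    then show False using agree l by blast
  qed
  then show ?thesis unfolding base_qdist_def if_P[OF True] by (rule inverse_Suc_antimono)
next
  case False
  then have "base_qdist b x y = 0" unfolding base_qdist_def by (rule if_not_P)
  then show ?thesis by simp
qed

lemma base_qdist_ultra: "base_qdist b x z \<le> max (base_qdist b x y) (base_qdist b y z)"
proof (cases "\<exists>n. x \<in> b n \<and> z \<notin> b n")
  case True
  let ?l = "LEAST n. x \<in> b n \<and> z \<notin> b n"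
  have l: "x \<in> b ?l" "z \<notin> b ?l" using LeastI_ex[OF True] by auto
  have "base_qdist b x z = inverse (real (Suc ?l))" using True by (simp add: base_qdist_def)
  moreover have "inverse (real (Suc ?l)) \<le> base_qdist b x y \<or> inverse (real (Suc ?l)) \<le> base_qdist b y z"
  proof (cases "y \<in> b ?l")
    case True
    show ?thesis using base_qdist_ge[of y b ?l z, OF True l(2)] by (rule disjI2)
  next
    case False
    show ?thesis using base_qdist_ge[of x b ?l y, OF l(1) False] by (rule disjI1)
  qed
  ultimately show ?thesis by (simp add: le_max_iff_disj)
next
  case False
  then have "base_qdist b x z = 0" unfolding base_qdist_def by (rule if_not_P)
  then show ?thesis using base_qdist_nonneg[of b x y] by simp
qed

lemma wf_obtain_eventually_constant:
  fixes \<sigma> :: "nat \<Rightarrow> 'a"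
  assumes "wf r" and descent: "\<And>n m. N \<le> n \<Longrightarrow> n \<le> m \<Longrightarrow> \<sigma> m \<noteq> \<sigma> n \<Longrightarrow> (\<sigma> m, \<sigma> n) \<in> r"
  obtains k where "\<And>m. k \<le> m \<Longrightarrow> \<sigma> m = \<sigma> k"
proof -
  have "\<sigma> N \<in> \<sigma> ` {N..}" by simp
  then obtain z where z: "z \<in> \<sigma> ` {N..}" and min: "\<And>y. (y, z) \<in> r \<Longrightarrow> y \<notin> \<sigma> ` {N..}"
    by (rule wfE_min[OF \<open>wf r\<close>]) blast
  from z obtain k where "N \<le> k" "z = \<sigma> k" by blast
  have "\<sigma> m = \<sigma> k" if "k \<le> m" for m
  proof (rule ccontr)
    assume "\<sigma> m \<noteq> \<sigma> k"
    then have "(\<sigma> m, z) \<in> r" using descent[OF \<open>N \<le> k\<close> that] \<open>z = \<sigma> k\<close> by simp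
    moreover have "\<sigma> m \<in> \<sigma> ` {N..}" using \<open>N \<le> k\<close> that by simp
    ultimately show False using min[of "\<sigma> m"] by simp
  qed
  then show ?thesis by (rule that)
qed

locale wf_nbhd_base =
  fixes X :: "'a topology" and W :: "'a \<Rightarrow> 'a set" and b :: "nat \<Rightarrow> 'a set"
  assumes openin_W: "x \<in> topspace X \<Longrightarrow> openin X (W x)"
    and W_self: "x \<in> topspace X \<Longrightarrow> x \<in> W x"
    and W_trans: "x \<in> topspace X \<Longrightarrow> y \<in> W x \<Longrightarrow> W y \<subseteq> W x"
    and wf_W: "wf {(y, x). x \<in> topspace X \<and> y \<in> W x \<and> y \<noteq> x}"
    and openin_b: "openin X (b n)"
    and base_b: "openin X U \<Longrightarrow> x \<in> U \<Longrightarrow> \<exists>n. x \<in> b n \<and> b n \<subseteq> U"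
begin

definition qdist :: "'a \<Rightarrow> 'a \<Rightarrow> real" where
  "qdist x y = max (base_qdist b x y) (if y \<in> W x then 0 else 1)"

lemma W_if_qdist_less_one: "qdist x y < 1 \<Longrightarrow> y \<in> W x"
  by (auto simp: qdist_def split: if_splits)

lemma base_qdist_le_qdist: "base_qdist b x y \<le> qdist x y"
  by (simp add: qdist_def)

lemma qdist_nonneg: "0 \<le> qdist x y"
  using base_qdist_nonneg[of b x y] base_qdist_le_qdist[of x y] by linarith

lemma quasi_metric_on_qdist: "quasi_metric_on (topspace X) qdist"
  unfolding quasi_metric_on_def
proof (intro conjI ballI)
  fix x y assume "x \<in> topspace X" "y \<in> topspace X"
  show "0 \<le> qdist x y" by (rule qdist_nonneg)
  show "x = y \<longleftrightarrow> qdist x y = 0 \<and> qdist y x = 0"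
  proof
    assume "qdist x y = 0 \<and> qdist y x = 0"
    then have "y \<in> W x" "x \<in> W y" by (simp_all add: W_if_qdist_less_one)
    then show "x = y"
      using wf_not_sym[OF wf_W] \<open>x \<in> topspace X\<close> \<open>y \<in> topspace X\<close> by blast
  next
    assume "x = y"
    then show "qdist x y = 0 \<and> qdist y x = 0"
      using W_self[OF \<open>x \<in> topspace X\<close>] by (simp add: qdist_def base_qdist_self)
  qed
next
  fix x y z assume x: "x \<in> topspace X"
  have "(if z \<in> W x then 0 else 1) \<le> qdist x y + qdist y z"
  proof (cases "z \<in> W x")
    case False
    then have "y \<notin> W x \<or> z \<notin> W y" using W_trans[OF x] by blast
    then have "1 \<le> qdist x y \<or> 1 \<le> qdist y z" using W_if_qdist_less_one not_le by blast
    then show ?thesis using False qdist_nonneg[of x y] qdist_nonneg[of y z] by auto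
  qed (simp add: add_nonneg_nonneg qdist_nonneg)
  moreover have "base_qdist b x z \<le> max (base_qdist b x y) (base_qdist b y z)"
    by (rule base_qdist_ultra)
  then have "base_qdist b x z \<le> qdist x y + qdist y z"
    using base_qdist_le_qdist[of x y] base_qdist_le_qdist[of y z]
      base_qdist_nonneg[of b x y] base_qdist_nonneg[of b y z] by (simp add: max_def split: if_splits)
  ultimately show "qdist x z \<le> qdist x y + qdist y z"
    unfolding qdist_def[of x z] by simp
qed

lemma openin_base_agreement: "openin X {z \<in> topspace X. \<forall>n<K. y \<in> b n \<longrightarrow> z \<in> b n}"
proof -
  let ?F = "insert (topspace X) ((\<lambda>n. if y \<in> b n then b n else topspace X) ` {..<K})"
  have "\<Inter>?F = {z \<in> topspace X. \<forall>n<K. y \<in> b n \<longrightarrow> z \<in> b n}"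
    using openin_subset[OF openin_b] by auto
  moreover have "openin X (\<Inter>?F)" by (rule openin_Inter) (auto simp: openin_b)
  ultimately show ?thesis by simp
qed

text \<open>Around a point \<open>y\<close> of the ball, the points agreeing with \<open>y\<close> on the first \<open>K\<close> basic sets
  and lying in \<open>W y\<close> stay in the ball: the base part is an ultrametric.\<close>
lemma openin_qball_qdist:
  assumes x: "x \<in> topspace X" and "0 < \<epsilon>"
  shows "openin X (qball (topspace X) qdist x \<epsilon>)"
proof (subst openin_subopen, intro ballI)
  fix y assume "y \<in> qball (topspace X) qdist x \<epsilon>"
  then have y: "y \<in> topspace X" and xy: "qdist x y < \<epsilon>" by (auto simp: qball_def)
  obtain K where K: "inverse (real (Suc K)) < \<epsilon>"
    using \<open>0 < \<epsilon>\<close> reals_Archimedean by blast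
  define T where "T = {z \<in> topspace X. \<forall>n<K. y \<in> b n \<longrightarrow> z \<in> b n} \<inter> W y"
  have "openin X T" unfolding T_def using openin_base_agreement openin_W[OF y] by blast
  moreover have "y \<in> T" unfolding T_def using y W_self by blast
  moreover have "T \<subseteq> qball (topspace X) qdist x \<epsilon>"
  proof
    fix z assume z: "z \<in> T"
    then have "base_qdist b y z < \<epsilon>" using base_qdist_le[of K y b z] K unfolding T_def by force
    then have "base_qdist b x z < \<epsilon>"
      using base_qdist_ultra[of b x z y] base_qdist_le_qdist[of x y] xy by linarith
    moreover have "(if z \<in> W x then 0 else 1) < \<epsilon>"
    proof (cases "\<epsilon> \<le> 1")
      case True
      then have "y \<in> W x" using W_if_qdist_less_one xy by simp
      then have "z \<in> W x" using W_trans[OF x] z unfolding T_def by blast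
      then show ?thesis using \<open>0 < \<epsilon>\<close> by simp
    qed simp
    moreover have "z \<in> topspace X" using z unfolding T_def by blast
    ultimately show "z \<in> qball (topspace X) qdist x \<epsilon>"
      unfolding qball_def qdist_def by simp
  qed
  ultimately show "\<exists>T. openin X T \<and> y \<in> T \<and> T \<subseteq> qball (topspace X) qdist x \<epsilon>" by blast
qed

lemma qball_qdist_subset:
  assumes "openin X U" "x \<in> U"
  shows "\<exists>\<epsilon>>0. qball (topspace X) qdist x \<epsilon> \<subseteq> U"
proof -
  obtain n where n: "x \<in> b n" "b n \<subseteq> U" using base_b[OF assms] by blast
  have "qball (topspace X) qdist x (inverse (real (Suc n))) \<subseteq> b n"
  proof
    fix z assume "z \<in> qball (topspace X) qdist x (inverse (real (Suc n)))"
    then have "base_qdist b x z < inverse (real (Suc n))"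
      using base_qdist_le_qdist[of x z] by (simp add: qball_def)
    then show "z \<in> b n" using base_qdist_ge[of x b n z, OF n(1)] by force
  qed
  then show ?thesis using n(2) by (intro exI[of _ "inverse (real (Suc n))"]) auto
qed

lemma qm_topology_qdist: "qm_topology (topspace X) qdist = X"
  using quasi_metric_on_qdist openin_qball_qdist qball_qdist_subset by (rule qm_topology_eqI)

lemma qm_complete_qdist: "qm_complete (topspace X) qdist"
  unfolding qm_complete_def
proof (intro allI impI)
  fix \<sigma> assume Cauchy: "qm_Cauchy (topspace X) qdist \<sigma>"
  then have \<sigma>: "\<sigma> n \<in> topspace X" for n unfolding qm_Cauchy_def by blast
  have "\<forall>\<epsilon>>0. \<exists>n0. \<forall>n m. n0 \<le> n \<and> n \<le> m \<longrightarrow> qdist (\<sigma> n) (\<sigma> m) < \<epsilon>"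
    using Cauchy unfolding qm_Cauchy_def by blast
  then have "\<exists>n0. \<forall>n m. n0 \<le> n \<and> n \<le> m \<longrightarrow> qdist (\<sigma> n) (\<sigma> m) < 1"
    by simp
  then obtain N where N: "\<forall>n m. N \<le> n \<and> n \<le> m \<longrightarrow> qdist (\<sigma> n) (\<sigma> m) < 1" ..
  obtain k where k: "\<And>m. k \<le> m \<Longrightarrow> \<sigma> m = \<sigma> k"
  proof (rule wf_obtain_eventually_constant[OF wf_W])
    fix n m assume nm: "N \<le> n" "n \<le> m" "\<sigma> m \<noteq> \<sigma> n"
    then have "qdist (\<sigma> n) (\<sigma> m) < 1" using N by blast
    then have "\<sigma> m \<in> W (\<sigma> n)" by (rule W_if_qdist_less_one)
    then show "(\<sigma> m, \<sigma> n) \<in> {(y, x). x \<in> topspace X \<and> y \<in> W x \<and> y \<noteq> x}"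
      using \<sigma>[of n] nm(3) by blast
  qed blast
  have "\<sigma> k \<in> topspace (qm_topology (topspace X) (sym_qm qdist))"
    using \<sigma> topspace_qm_topology[OF quasi_metric_on_sym_qm[OF quasi_metric_on_qdist]] by simp
  moreover have "eventually (\<lambda>m. \<sigma> m = \<sigma> k) sequentially"
    unfolding eventually_sequentially using k by blast
  ultimately have "limitin (qm_topology (topspace X) (sym_qm qdist)) \<sigma> (\<sigma> k) sequentially"
    by (rule limitin_eventually)
  then show "\<exists>y. limitin (qm_topology (topspace X) (sym_qm qdist)) \<sigma> y sequentially" ..
qed

lemma quasi_Polish: "quasi_Polish X"
proof -
  have "second_countable X"
    unfolding second_countable_def using openin_b base_b
    by (intro exI[of _ "range b"]) auto
  then show ?thesis
    unfolding quasi_Polish_def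
    using quasi_metric_on_qdist qm_topology_qdist qm_complete_qdist by blast
qed

end

lemma scattered_second_countable_imp_quasi_Polish:
  assumes scattered: "scattered_space X" and "second_countable X"
  shows "quasi_Polish X"
proof -
  obtain V where V: "\<And>x. x \<in> topspace X \<Longrightarrow> openin X (V x) \<and> x \<in> V x"
    "wf {(y, x). x \<in> topspace X \<and> y \<in> V x \<and> y \<noteq> x}"
    using scattered_space_obtain_wf_nbhds[OF scattered] by blast
  obtain W where W: "\<And>x. x \<in> topspace X \<Longrightarrow> openin X (W x) \<and> x \<in> W x"
    "\<And>x y. x \<in> topspace X \<Longrightarrow> y \<in> W x \<Longrightarrow> W y \<subseteq> W x"
    "wf {(y, x). x \<in> topspace X \<and> y \<in> W x \<and> y \<noteq> x}"
    using wf_nbhds_obtain_transitive[OF V] by blast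
  obtain b :: "nat \<Rightarrow> 'a set" where "\<And>n. openin X (b n)" "\<And>U x. openin X U \<Longrightarrow> x \<in> U \<Longrightarrow> \<exists>n. x \<in> b n \<and> b n \<subseteq> U"
    using second_countable_obtain_base_seq[OF assms(2)] by blast
  with W have "wf_nbhd_base X W b" by unfold_locales auto
  then show ?thesis by (rule wf_nbhd_base.quasi_Polish)
qed

theorem theorem65:
  fixes X :: "'a topology"
  assumes "second_countable X"
  shows "scattered_space X \<longleftrightarrow>
           countable (topspace X) \<and> quasi_Polish X \<and> T_D_space X"
proof
  assume scattered: "scattered_space X"
  show "countable (topspace X) \<and> quasi_Polish X \<and> T_D_space X"
    using scattered_second_countable_imp_countable[OF scattered assms]
      scattered_second_countable_imp_quasi_Polish[OF scattered assms]
      scattered_imp_T_D[OF scattered] by blast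
next
  assume "countable (topspace X) \<and> quasi_Polish X \<and> T_D_space X"
  then show "scattered_space X"
    by (elim conjE) (rule countable_quasi_Polish_T_D_imp_scattered)
qed

end
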